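(* Let $\sigma,\tau$ be edge-faces and $[\mathcal{F}],[\mathcal{E}]$ two $\mathrm{PGL}(4)$-classes of tetrahedra of flags. Then $[\mathcal{F}],[\mathcal{E}]$ are $(\sigma,\tau)$-glueable if and only if $t^{\mathcal{F}}_\sigma t^{\mathcal{E}}_\tau=1$. Moreover, if they are $(\sigma,\tau)$-glueable then they are $(\sigma',\tau')$-glueable for all $\sigma'\in\{\sigma,\sigma_+,\sigma_-\}$ and $\tau'\in\{\tau,\tau_+,\tau_-\}$.
   Context: Flags: $(V,\eta)$, $\eta$ a plane of $\mathbb{RP}^3$ through $V$; $\mathrm{PGL}(4)$ acts diagonally. A tetrahedron of flags is a non-degenerate ($\eta_i(V_j)=0\iff i=j$) ordered quadruple $(V_m,\eta_m)_{m=1}^4$ with $V_m$ not coplanar such that some projective tetrahedron with vertices $V_m$ has interior disjoint from all $\eta_m$. Edge-faces $\sigma=(ij)k$ are even permutations $[ijkl]$ of $\{1,2,3,4\}$; $\sigma_+=(ki)j$, $\sigma_-=(jk)i$. Triple ratio $t_\sigma=t_{ijk}=\frac{\bar\eta_i(\bar V_j)\bar\eta_j(\bar V_k)\bar\eta_k(\bar V_i)}{\bar\eta_i(\bar V_k)\bar\eta_j(\bar V_i)\bar\eta_k(\bar V_j)}$. Two tetrahedra of flags $\mathcal{F}=(V_m,\eta_m)$, $\mathcal{E}=(W_m,\zeta_m)$ are glued along $(\sigma,\tau)$, with $\sigma=(ij)k$, $\tau=(i'j')k'$, if $(V_i,\eta_i)=(W_{j'},\zeta_{j'})$, $(V_j,\eta_j)=(W_{i'},\zeta_{i'})$,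 $(V_k,\eta_k)=(W_{k'},\zeta_{k'})$. Two classes are $(\sigma,\tau)$-glueable if they have representatives glued along $(\sigma,\tau)$. *)

theory Defs
  imports "HOL-Analysis.Analysis" "HOL-Combinatorics.Permutations"
begin

(* Points of RP^3 are represented by nonzero lifts in real^4, planes by nonzero
   covectors in real^4 (eta(V) = eta \<bullet> V).  A quadruple of flags is a map
   nat \<Rightarrow> (point lift, plane lift); only indices 1..4 are relevant. *)

type_synonym vec4 = "real ^ 4"
type_synonym flagquad = "nat \<Rightarrow> vec4 \<times> vec4"

definition pt :: "flagquad \<Rightarrow> nat \<Rightarrow> vec4" where "pt F m = fst (F m)"
definition pl :: "flagquad \<Rightarrow> nat \<Rightarrow> vec4" where "pl F m = snd (F m)"

definition proj_eq :: "vec4 \<Rightarrow> vec4 \<Rightarrow> bool" where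
  "proj_eq x y \<longleftrightarrow> x \<noteq> 0 \<and> (\<exists>c. c \<noteq> 0 \<and> y = c *\<^sub>R x)"

definition flag_eq :: "vec4 \<times> vec4 \<Rightarrow> vec4 \<times> vec4 \<Rightarrow> bool" where
  "flag_eq f g \<longleftrightarrow> proj_eq (fst f) (fst g) \<and> proj_eq (snd f) (snd g)"

definition tetrahedron_of_flags :: "flagquad \<Rightarrow> bool" where
  "tetrahedron_of_flags F \<longleftrightarrow>
     (\<forall>i\<in>{1..4}. \<forall>j\<in>{1..4}. (pl F i \<bullet> pt F j = 0 \<longleftrightarrow> i = j)) \<and>
     (\<forall>m\<in>{1..4}. pt F m \<noteq> 0 \<and> pl F m \<noteq> 0) \<and>
     \<not> dependent (pt F ` {1..4}) \<and> inj_on (pt F) {1..4} \<and>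
     (\<exists>s::nat \<Rightarrow> real. (\<forall>m\<in>{1..4}. s m = 1 \<or> s m = -1) \<and>
        (\<forall>n\<in>{1..4}. \<forall>c::nat \<Rightarrow> real. (\<forall>m\<in>{1..4}. c m > 0) \<longrightarrow>
            pl F n \<bullet> (\<Sum>m\<in>{1..4}. (c m * s m) *\<^sub>R pt F m) \<noteq> 0))"

(* PGL(4) acting diagonally: V \<mapsto> A V, eta \<mapsto> eta \<circ> A^{-1} *)
definition pgl_act :: "real^4^4 \<Rightarrow> flagquad \<Rightarrow> flagquad" where
  "pgl_act A F = (\<lambda>m. (A *v pt F m, transpose (matrix_inv A) *v pl F m))"

definition pgl_equiv :: "flagquad \<Rightarrow> flagquad \<Rightarrow> bool" where
  "pgl_equiv F F' \<longleftrightarrow> (\<exists>A::real^4^4. invertible A \<and>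
      (\<forall>m\<in>{1..4}. flag_eq (pgl_act A F m) (F' m)))"

definition edge_face :: "nat \<times> nat \<times> nat \<Rightarrow> bool" where
  "edge_face \<sigma> \<longleftrightarrow> (case \<sigma> of (i, j, k) \<Rightarrow>
      \<exists>p. p permutes {1..4} \<and> evenperm p \<and> p 1 = i \<and> p 2 = j \<and> p 3 = k)"

definition ef_plus :: "nat \<times> nat \<times> nat \<Rightarrow> nat \<times> nat \<times> nat" where
  "ef_plus \<sigma> = (case \<sigma> of (i, j, k) \<Rightarrow> (k, i, j))"
definition ef_minus :: "nat \<times> nat \<times> nat \<Rightarrow> nat \<times> nat \<times> nat" where
  "ef_minus \<sigma> = (case \<sigma> of (i, j, k) \<Rightarrow> (j, k, i))"

definition triple_ratio :: "flagquad \<Rightarrow> nat \<times> nat \<times> nat \<Rightarrow> real" where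
  "triple_ratio F \<sigma> = (case \<sigma> of (i, j, k) \<Rightarrow>
     ((pl F i \<bullet> pt F j) * (pl F j \<bullet> pt F k) * (pl F k \<bullet> pt F i)) /
     ((pl F i \<bullet> pt F k) * (pl F j \<bullet> pt F i) * (pl F k \<bullet> pt F j)))"

definition glued :: "flagquad \<Rightarrow> flagquad \<Rightarrow> nat \<times> nat \<times> nat \<Rightarrow> nat \<times> nat \<times> nat \<Rightarrow> bool" where
  "glued F E \<sigma> \<tau> \<longleftrightarrow> (case \<sigma> of (i, j, k) \<Rightarrow> case \<tau> of (i', j', k') \<Rightarrow>
      flag_eq (F i) (E j') \<and> flag_eq (F j) (E i') \<and> flag_eq (F k) (E k'))"

definition glueable :: "flagquad \<Rightarrow> flagquad \<Rightarrow> nat \<times> nat \<times> nat \<Rightarrow> nat \<times> nat \<times> nat \<Rightarrow> bool" where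
  "glueable F E \<sigma> \<tau> \<longleftrightarrow> (\<exists>F' E'. pgl_equiv F F' \<and> pgl_equiv E E' \<and> glued F' E' \<sigma> \<tau>)"

end

theory Submission
  imports Defs
begin

text \<open>
  Triple ratios are invariant under rescaling the lifts and under \<open>PGL(4)\<close>, so glued
  representatives give \<open>t\<^sup>F(i,j,k) = t\<^sup>E(j',i',k') = 1 / t\<^sup>E(i',j',k')\<close>.
  Conversely, one looks for \<open>B \<in> GL(4)\<close> sending the vertices \<open>W\<^sub>j\<^sub>', W\<^sub>i\<^sub>', W\<^sub>k\<^sub>'\<close> of \<open>E\<close>
  to multiples of \<open>V\<^sub>i, V\<^sub>j, V\<^sub>k\<close> and its fourth vertex to an affine combination of the
  vertices of \<open>F\<close>; matching the three planes as well is a system of nine equations in nine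
  scalars. The scalings are consistent exactly when \<open>t\<^sup>F(\<sigma>) t\<^sup>E(\<tau>) = 1\<close>, and the remaining
  \<open>3 \<times> 3\<close> linear system has determinant
  \<open>\<eta>\<^sub>i(V\<^sub>j) \<eta>\<^sub>j(V\<^sub>k) \<eta>\<^sub>k(V\<^sub>i) + \<eta>\<^sub>i(V\<^sub>k) \<eta>\<^sub>j(V\<^sub>i) \<eta>\<^sub>k(V\<^sub>j)\<close>, which is nonzero because the
  convexity condition on a tetrahedron of flags gives both summands the same sign.
  A cyclic rotation of the face does not change its triple ratio, whence the statement for
  \<open>\<sigma>\<^sub>+, \<sigma>\<^sub>-, \<tau>\<^sub>+, \<tau>\<^sub>-\<close>.
\<close>

lemma matrix_inv_right: "invertible A \<Longrightarrow> A ** matrix_inv A = mat 1"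
  and matrix_inv_left: "invertible A \<Longrightarrow> matrix_inv A ** A = mat 1"
  for A :: "'a::semiring_1^'n^'m"
  using someI_ex[of "\<lambda>A'. A ** A' = mat 1 \<and> A' ** A = mat 1"]
  by (auto simp: invertible_def matrix_inv_def)

lemma matrix_inv_mult_cancel: "invertible A \<Longrightarrow> matrix_inv A *v (A *v x) = x"
  for A :: "real^'n^'n"
  by (simp add: matrix_vector_mul_assoc matrix_inv_left)

lemma invertible_matrix_inv: "invertible A \<Longrightarrow> invertible (matrix_inv A)"
  for A :: "real^'n^'n"
  using matrix_inv_left matrix_inv_right invertible_def by blast

lemma matrix_inv_mat1: "matrix_inv (mat 1 :: real^'n^'n) = mat 1"
  using matrix_inv_left[of "mat 1 :: real^'n^'n"] by (simp add: invertible_def)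

lemma invertible_mult_vector_nonzero:
  fixes A :: "real^'n^'n"
  assumes "invertible A" "x \<noteq> 0"
  shows "A *v x \<noteq> 0"
  by (metis assms matrix_inv_mult_cancel matrix_vector_mult_0_right)

lemma invertible_transpose_matrix_inv: "invertible A \<Longrightarrow> invertible (transpose (matrix_inv A))"
  for A :: "real^'n^'n"
  by (simp add: invertible_matrix_inv transpose_invertible)

definition lin_indep4 :: "'a::real_vector \<Rightarrow> 'a \<Rightarrow> 'a \<Rightarrow> 'a \<Rightarrow> bool" where
  "lin_indep4 v1 v2 v3 v4 \<longleftrightarrow> (\<forall>x1 x2 x3 x4.
     x1 *\<^sub>R v1 + x2 *\<^sub>R v2 + x3 *\<^sub>R v3 + x4 *\<^sub>R v4 = 0 \<longrightarrow> x1 = 0 \<and> x2 = 0 \<and> x3 = 0 \<and> x4 = 0)"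

lemma lin_indep4_if_independent:
  fixes v1 v2 v3 v4 :: "'a::real_vector"
  assumes "\<not> dependent {v1, v2, v3, v4}" "distinct [v1, v2, v3, v4]"
  shows "lin_indep4 v1 v2 v3 v4"
  unfolding lin_indep4_def
proof (intro allI impI)
  fix x1 x2 x3 x4 :: real
  assume sum0: "x1 *\<^sub>R v1 + x2 *\<^sub>R v2 + x3 *\<^sub>R v3 + x4 *\<^sub>R v4 = 0"
  define u where "u v = (if v = v1 then x1 else if v = v2 then x2 else if v = v3 then x3 else x4)" for v
  have "(\<Sum>v\<in>{v1, v2, v3, v4}. u v *\<^sub>R v) = 0"
    using assms(2) sum0 by (auto simp: u_def add.assoc)
  then have "\<forall>v\<in>{v1, v2, v3, v4}. u v = 0"
    using assms(1) dependent_finite[of "{v1, v2, v3, v4}"] by auto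
  then show "x1 = 0 \<and> x2 = 0 \<and> x3 = 0 \<and> x4 = 0"
    using assms(2) by (auto simp: u_def)
qed

lemma lin_indep4_shear:
  assumes "lin_indep4 v1 v2 v3 v4" "l1 \<noteq> 0" "l2 \<noteq> 0" "l3 \<noteq> 0"
  shows "lin_indep4 (l1 *\<^sub>R v1) (l2 *\<^sub>R v2) (l3 *\<^sub>R v3) (u1 *\<^sub>R v1 + u2 *\<^sub>R v2 + u3 *\<^sub>R v3 + v4)"
  unfolding lin_indep4_def
proof (intro allI impI)
  fix x1 x2 x3 x4 :: real
  assume "x1 *\<^sub>R l1 *\<^sub>R v1 + x2 *\<^sub>R l2 *\<^sub>R v2 + x3 *\<^sub>R l3 *\<^sub>R v3
          + x4 *\<^sub>R (u1 *\<^sub>R v1 + u2 *\<^sub>R v2 + u3 *\<^sub>R v3 + v4) = 0"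
  then have "(x1 * l1 + x4 * u1) *\<^sub>R v1 + (x2 * l2 + x4 * u2) *\<^sub>R v2
             + (x3 * l3 + x4 * u3) *\<^sub>R v3 + x4 *\<^sub>R v4 = 0"
    by (simp add: algebra_simps)
  then have "x1 * l1 + x4 * u1 = 0 \<and> x2 * l2 + x4 * u2 = 0 \<and> x3 * l3 + x4 * u3 = 0 \<and> x4 = 0"
    using assms(1) unfolding lin_indep4_def by blast
  with assms(2-4) show "x1 = 0 \<and> x2 = 0 \<and> x3 = 0 \<and> x4 = 0"
    by auto
qed

definition cols4 :: "vec4 \<Rightarrow> vec4 \<Rightarrow> vec4 \<Rightarrow> vec4 \<Rightarrow> real^4^4" where
  "cols4 p1 p2 p3 p4 = (\<chi> i j. if j = 1 then p1$i else if j = 2 then p2$i else if j = 3 then p3$i else p4$i)"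

lemma cols4_mult_vector:
  "cols4 p1 p2 p3 p4 *v x = (x$1) *\<^sub>R p1 + (x$2) *\<^sub>R p2 + (x$3) *\<^sub>R p3 + (x$4) *\<^sub>R p4"
  by (simp add: cols4_def vec_eq_iff matrix_vector_mult_def sum_4 algebra_simps)

lemma cols4_mult_axis:
  "cols4 p1 p2 p3 p4 *v axis 1 1 = p1" "cols4 p1 p2 p3 p4 *v axis 2 1 = p2"
  "cols4 p1 p2 p3 p4 *v axis 3 1 = p3" "cols4 p1 p2 p3 p4 *v axis 4 1 = p4"
  by (simp_all add: cols4_mult_vector axis_def)

lemma invertible_cols4:
  assumes "lin_indep4 p1 p2 p3 p4"
  shows "invertible (cols4 p1 p2 p3 p4)"
proof -
  have "x = 0" if "cols4 p1 p2 p3 p4 *v x = 0" for x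
  proof -
    have "x$1 = 0 \<and> x$2 = 0 \<and> x$3 = 0 \<and> x$4 = 0"
      using assms that unfolding lin_indep4_def cols4_mult_vector by blast
    then show "x = 0"
      by (simp add: vec_eq_iff forall_4)
  qed
  then show ?thesis
    using matrix_left_invertible_ker invertible_left_inverse by blast
qed

lemma exists_invertible_matrix_map_frame:
  fixes w1 w2 w3 w4 v1 v2 v3 v4 :: vec4
  assumes "lin_indep4 w1 w2 w3 w4" "lin_indep4 v1 v2 v3 v4"
  obtains B where "invertible B" "B *v w1 = v1" "B *v w2 = v2" "B *v w3 = v3" "B *v w4 = v4"
proof -
  let ?W = "cols4 w1 w2 w3 w4" and ?V = "cols4 v1 v2 v3 v4"
  have W: "invertible ?W" and V: "invertible ?V"
    using assms by (simp_all add: invertible_cols4)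
  have map: "(?V ** matrix_inv ?W) *v (?W *v e) = ?V *v e" for e
    by (simp add: matrix_vector_mul_assoc[symmetric] matrix_inv_mult_cancel[OF W])
  show thesis
  proof (rule that)
    show "invertible (?V ** matrix_inv ?W)"
      by (rule invertible_mult[OF V invertible_matrix_inv[OF W]])
  qed (use map[of "axis 1 1"] map[of "axis 2 1"] map[of "axis 3 1"] map[of "axis 4 1"] in
       \<open>simp_all add: cols4_mult_axis\<close>)
qed

lemma transpose_matrix_inv_eq_if_inner_eq:
  fixes B :: "real^4^4" and w1 w2 w3 w4 z e :: vec4
  assumes B: "invertible B" and W: "lin_indep4 w1 w2 w3 w4"
    and "z \<bullet> w1 = m * (e \<bullet> (B *v w1))" "z \<bullet> w2 = m * (e \<bullet> (B *v w2))"
        "z \<bullet> w3 = m * (e \<bullet> (B *v w3))" "z \<bullet> w4 = m * (e \<bullet> (B *v w4))"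
  shows "transpose (matrix_inv B) *v z = m *\<^sub>R e"
proof -
  let ?y = "z - m *\<^sub>R (e v* B)"
  have "?y \<bullet> w1 = 0" "?y \<bullet> w2 = 0" "?y \<bullet> w3 = 0" "?y \<bullet> w4 = 0"
    by (simp_all add: inner_diff_left dot_lmul_matrix assms)
  then have "(transpose (cols4 w1 w2 w3 w4) *v ?y) = 0"
    by (simp add: vec_eq_iff forall_4 cols4_def matrix_vector_mult_def transpose_def sum_4 inner_vec_def mult.commute)
  then have "z = m *\<^sub>R (e v* B)"
    using invertible_mult_vector_nonzero[OF transpose_invertible[OF invertible_cols4[OF W]]] eq_iff_diff_eq_0
    by metis
  then have "transpose (matrix_inv B) *v z = m *\<^sub>R ((e v* B) v* matrix_inv B)"
    by (simp add: vec_eq_iff vector_matrix_mult_def sum_distrib_left algebra_simps)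
  also have "\<dots> = m *\<^sub>R e"
    by (simp add: vector_matrix_mul_assoc matrix_inv_right[OF B])
  finally show ?thesis .
qed

lemma solve_hollow_3x3:
  fixes hab hac hba hbc hca hcb ra rb rc :: real
  assumes "hab * hbc * hca + hac * hba * hcb \<noteq> 0"
  obtains ua ub uc where "ub * hab + uc * hac = ra" "ua * hba + uc * hbc = rb" "ua * hca + ub * hcb = rc"
proof -
  define D where "D = hab * hbc * hca + hac * hba * hcb"
  define ua where "ua = (- hbc * hcb * ra + hac * hcb * rb + hab * hbc * rc) / D"
  define ub where "ub = (hbc * hca * ra - hac * hca * rb + hac * hba * rc) / D"
  define uc where "uc = (hba * hcb * ra + hab * hca * rb - hab * hba * rc) / D"
  have D: "D \<noteq> 0" using assms by (simp add: D_def)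
  show thesis
  proof (rule that)
    show "ub * hab + uc * hac = ra" "ua * hba + uc * hbc = rb" "ua * hca + ub * hcb = rc"
      using D by (simp_all add: ua_def ub_def uc_def field_simps) (simp_all add: D_def algebra_simps)
  qed
qed

lemma exists_gluing_coefficients:
  fixes hab hac hba hbc hca hcb zab zac zba zbc zca zcb had hbd hcd zad zbd zcd :: real
  assumes h: "hab \<noteq> 0" "hac \<noteq> 0" "hba \<noteq> 0" "hbc \<noteq> 0" "hca \<noteq> 0" "hcb \<noteq> 0"
    and z: "zab \<noteq> 0" "zac \<noteq> 0" "zba \<noteq> 0" "zbc \<noteq> 0" "zca \<noteq> 0" "zcb \<noteq> 0"
    and ratio: "hab * hbc * hca * (zac * zba * zcb) = hac * hba * hcb * (zab * zbc * zca)"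
    and det: "hab * hbc * hca + hac * hba * hcb \<noteq> 0"
  obtains la lb lc ma mb mc ua ub uc
  where "la \<noteq> 0" "lb \<noteq> 0" "lc \<noteq> 0" "ma \<noteq> 0" "mb \<noteq> 0" "mc \<noteq> 0"
    "zab = ma * lb * hab" "zac = ma * lc * hac" "zba = mb * la * hba"
    "zbc = mb * lc * hbc" "zca = mc * la * hca" "zcb = mc * lb * hcb"
    "zad = ma * (ub * hab + uc * hac + had)" "zbd = mb * (ua * hba + uc * hbc + hbd)"
    "zcd = mc * (ua * hca + ub * hcb + hcd)"
proof -
  \<comment> \<open>Normalise \<open>la = 1\<close>; five of the six off-diagonal equations then fix the other scalars,
      and the sixth one is the triple ratio condition.\<close>
  define mb where "mb = zba / hba"
  define mc where "mc = zca / hca"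
  define lb where "lb = zcb / (mc * hcb)"
  define lc where "lc = zbc / (mb * hbc)"
  define ma where "ma = zab / (lb * hab)"
  have nz: "mb \<noteq> 0" "mc \<noteq> 0" "lb \<noteq> 0" "lc \<noteq> 0" "ma \<noteq> 0"
    using h z by (simp_all add: mb_def mc_def lb_def lc_def ma_def)
  have "ma * lc * hac = zab * zbc * hac * zca * hcb * hba / (zcb * hab * zba * hbc * hca)"
    using h nz by (simp add: ma_def lb_def lc_def mb_def mc_def field_simps)
  also have "\<dots> = zac"
    using h z ratio by (simp add: field_simps)
  finally have zac: "zac = ma * lc * hac" ..
  obtain ua ub uc where u: "ub * hab + uc * hac = zad / ma - had"
    "ua * hba + uc * hbc = zbd / mb - hbd" "ua * hca + ub * hcb = zcd / mc - hcd"
    using solve_hollow_3x3[OF det] by blast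
  show thesis
    by (rule that[of 1 lb lc ma mb mc, where ua = ua and ub = ub and uc = uc])
      (use h nz zac u in \<open>simp_all add: mb_def mc_def lb_def lc_def ma_def\<close>)
qed

lemma exists_pos_combination_eq_zero:
  fixes x y z :: real
  assumes "x * y < 0"
  obtains c1 c2 where "c1 > 0" "c2 > 0" "c1 * x + c2 * y + z = 0"
proof -
  have pos: "z + \<bar>z\<bar> + 1 > 0" "\<bar>z\<bar> + 1 - z > 0" "\<bar>z\<bar> + 1 > 0"
    using abs_ge_self[of z] abs_ge_minus_self[of z] by linarith+
  consider "x > 0" "y < 0" | "x < 0" "y > 0"
    using assms by (auto simp: mult_less_0_iff)
  then show thesis
  proof cases
    case 1
    show thesis
      by (rule that[of "(\<bar>z\<bar> + 1) / x" "(z + \<bar>z\<bar> + 1) / (- y)"])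
        (use 1 pos in \<open>simp_all add: field_simps\<close>)
  next
    case 2
    show thesis
      by (rule that[of "(\<bar>z\<bar> + 1) / (- x)" "(\<bar>z\<bar> + 1 - z) / y"])
        (use 2 pos in \<open>simp_all add: field_simps\<close>)
  qed
qed

lemma tetrahedron_inner_eq_zero_iff:
  "tetrahedron_of_flags F \<Longrightarrow> i \<in> {1..4} \<Longrightarrow> j \<in> {1..4} \<Longrightarrow> pl F i \<bullet> pt F j = 0 \<longleftrightarrow> i = j"
  unfolding tetrahedron_of_flags_def by blast

lemma tetrahedron_nonzero:
  assumes "tetrahedron_of_flags F" "m \<in> {1..4}"
  shows "pt F m \<noteq> 0" "pl F m \<noteq> 0"
  using assms unfolding tetrahedron_of_flags_def by blast+

lemma tetrahedron_lin_indep4: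
  assumes T: "tetrahedron_of_flags F" and abcd: "{1..4} = {a, b, c, d}" "distinct [a, b, c, d]"
  shows "lin_indep4 (pt F a) (pt F b) (pt F c) (pt F d)"
proof (rule lin_indep4_if_independent)
  have "\<not> dependent (pt F ` {1..4})" "inj_on (pt F) {1..4}"
    using T unfolding tetrahedron_of_flags_def by blast+
  then show "\<not> dependent {pt F a, pt F b, pt F c, pt F d}"
    and "distinct [pt F a, pt F b, pt F c, pt F d]"
    using distinct_map[of "pt F" "[a, b, c, d]"] abcd by simp_all
qed

lemma tetrahedron_signs:
  assumes T: "tetrahedron_of_flags F"
  obtains s where "\<forall>m\<in>{1..4}. s m = 1 \<or> s m = -1"
    "\<And>n m1 m2. n \<in> {1..4} \<Longrightarrow> m1 \<in> {1..4} \<Longrightarrow> m2 \<in> {1..4} \<Longrightarrow> m1 \<noteq> n \<Longrightarrow> m2 \<noteq> n \<Longrightarrow>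
       s m1 * (pl F n \<bullet> pt F m1) * (s m2 * (pl F n \<bullet> pt F m2)) > 0"
proof -
  have "\<exists>s. (\<forall>m\<in>{1..4}. s m = 1 \<or> s m = -1) \<and>
          (\<forall>n\<in>{1..4}. \<forall>c::nat \<Rightarrow> real. (\<forall>m\<in>{1..4}. c m > 0) \<longrightarrow>
             pl F n \<bullet> (\<Sum>m\<in>{1..4}. (c m * s m) *\<^sub>R pt F m) \<noteq> 0)"
    using T unfolding tetrahedron_of_flags_def by (elim conjE)
  then obtain s where s1: "\<forall>m\<in>{1..4}. s m = 1 \<or> s m = -1"
    and s2: "\<forall>n\<in>{1..4}. \<forall>c::nat \<Rightarrow> real. (\<forall>m\<in>{1..4}. c m > 0) \<longrightarrow>
               pl F n \<bullet> (\<Sum>m\<in>{1..4}. (c m * s m) *\<^sub>R pt F m) \<noteq> 0"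
    by blast
  \<comment> \<open>If two vertices were seen with opposite signs from the face \<open>n\<close>, a suitable positive
      combination of the vertices would lie on the plane \<open>n\<close>.\<close>
  have "s m1 * (pl F n \<bullet> pt F m1) * (s m2 * (pl F n \<bullet> pt F m2)) > 0"
    if n: "n \<in> {1..4}" and m1: "m1 \<in> {1..4}" and m2: "m2 \<in> {1..4}" and "m1 \<noteq> n" "m2 \<noteq> n" for n m1 m2
  proof (rule ccontr)
    define w where "w m = s m * (pl F n \<bullet> pt F m)" for m
    assume not_pos: "\<not> w m1 * w m2 > 0"
    have w_nonzero: "w m \<noteq> 0" if "m \<in> {1..4}" "m \<noteq> n" for m
      using s1 tetrahedron_inner_eq_zero_iff[OF T n that(1)] that by (force simp: w_def)
    have "m1 \<noteq> m2"
      using not_pos w_nonzero[OF m1 \<open>m1 \<noteq> n\<close>] not_real_square_gt_zero by auto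
    have "w m1 * w m2 \<noteq> 0"
      using w_nonzero m1 m2 \<open>m1 \<noteq> n\<close> \<open>m2 \<noteq> n\<close> by simp
    with not_pos have "w m1 * w m2 < 0"
      by linarith
    then obtain c1 c2 where c: "c1 > 0" "c2 > 0"
      "c1 * w m1 + c2 * w m2 + (\<Sum>m\<in>{1..4} - {m1} - {m2}. w m) = 0"
      by (rule exists_pos_combination_eq_zero)
    define c where "c m = (if m = m1 then c1 else if m = m2 then c2 else 1)" for m
    have "pl F n \<bullet> (\<Sum>m\<in>{1..4}. (c m * s m) *\<^sub>R pt F m) = (\<Sum>m\<in>{1..4}. c m * w m)"
      by (simp add: inner_sum_right w_def mult.assoc)
    also have "\<dots> = c m1 * w m1 + (\<Sum>m\<in>{1..4} - {m1}. c m * w m)"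
      by (rule sum.remove) (use m1 in auto)
    also have "(\<Sum>m\<in>{1..4} - {m1}. c m * w m) = c m2 * w m2 + (\<Sum>m\<in>{1..4} - {m1} - {m2}. c m * w m)"
      by (rule sum.remove) (use m2 \<open>m1 \<noteq> m2\<close> in auto)
    also have "(\<Sum>m\<in>{1..4} - {m1} - {m2}. c m * w m) = (\<Sum>m\<in>{1..4} - {m1} - {m2}. w m)"
      by (rule sum.cong) (auto simp: c_def)
    finally have "pl F n \<bullet> (\<Sum>m\<in>{1..4}. (c m * s m) *\<^sub>R pt F m) = 0"
      using c \<open>m1 \<noteq> m2\<close> by (simp add: c_def)
    moreover have "\<forall>m\<in>{1..4}. c m > 0"
      using c by (simp add: c_def)
    ultimately show False
      using s2 n by blast
  qed
  with s1 show thesis using that by blast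
qed

lemma tetrahedron_face_products_pos:
  assumes T: "tetrahedron_of_flags F" and abc: "a \<in> {1..4}" "b \<in> {1..4}" "c \<in> {1..4}" "distinct [a, b, c]"
  shows "(pl F a \<bullet> pt F b) * (pl F b \<bullet> pt F c) * (pl F c \<bullet> pt F a) *
         ((pl F a \<bullet> pt F c) * (pl F b \<bullet> pt F a) * (pl F c \<bullet> pt F b)) > 0"
proof -
  let ?h = "\<lambda>x y. pl F x \<bullet> pt F y"
  obtain s where s: "\<forall>m\<in>{1..4}. s m = 1 \<or> s m = -1"
    and pos: "\<And>n m1 m2. n \<in> {1..4} \<Longrightarrow> m1 \<in> {1..4} \<Longrightarrow> m2 \<in> {1..4} \<Longrightarrow> m1 \<noteq> n \<Longrightarrow> m2 \<noteq> n \<Longrightarrow>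
       s m1 * ?h n m1 * (s m2 * ?h n m2) > 0"
    using tetrahedron_signs[OF T] by blast
  have "0 < (s b * ?h a b * (s c * ?h a c)) * (s c * ?h b c * (s a * ?h b a)) * (s a * ?h c a * (s b * ?h c b))"
    using pos abc by (simp add: mult_pos_pos)
  also have "\<dots> = ?h a b * ?h b c * ?h c a * (?h a c * ?h b a * ?h c b) * ((s a * s a) * (s b * s b) * (s c * s c))"
    by (simp add: algebra_simps)
  finally have "0 < ?h a b * ?h b c * ?h c a * (?h a c * ?h b a * ?h c b) * ((s a * s a) * (s b * s b) * (s c * s c))" .
  moreover have "s m * s m = 1" if "m \<in> {1..4}" for m
    using s that by force
  ultimately show ?thesis
    using abc by simp
qed

definition vertex_triple :: "nat \<times> nat \<times> nat \<Rightarrow> bool" where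
  "vertex_triple \<sigma> \<longleftrightarrow> (case \<sigma> of (i, j, k) \<Rightarrow> {i, j, k} \<subseteq> {1..4} \<and> distinct [i, j, k])"

lemma vertex_triple_if_edge_face: "edge_face \<sigma> \<Longrightarrow> vertex_triple \<sigma>"
proof -
  assume "edge_face \<sigma>"
  then obtain p where p: "p permutes {1..4}" "\<sigma> = (p 1, p 2, p 3)"
    unfolding edge_face_def by (auto split: prod.splits)
  then show "vertex_triple \<sigma>"
    using permutes_in_image[OF p(1)] permutes_inj[OF p(1)] by (auto simp: vertex_triple_def inj_eq)
qed

lemma vertex_triple_ef_plus: "vertex_triple \<sigma> \<Longrightarrow> vertex_triple (ef_plus \<sigma>)"
  and vertex_triple_ef_minus: "vertex_triple \<sigma> \<Longrightarrow> vertex_triple (ef_minus \<sigma>)"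
  by (auto simp: vertex_triple_def ef_plus_def ef_minus_def split: prod.splits)

lemma obtain_fourth_vertex:
  assumes "vertex_triple (a, b, c)"
  obtains d where "{1..4} = {a, b, c, d}" "distinct [a, b, c, d]"
proof -
  have "card ({1..4::nat} - {a, b, c}) = 1"
    using assms by (simp add: vertex_triple_def card_Diff_subset)
  then obtain d where d: "{1..4::nat} - {a, b, c} = {d}"
    by (rule card_1_singletonE)
  show thesis
  proof (rule that)
    have "{a, b, c} \<subseteq> {1..4}"
      using assms by (simp add: vertex_triple_def)
    then have "{1..4} = {a, b, c} \<union> ({1..4} - {a, b, c})"
      by (rule Diff_partition[symmetric])
    also have "\<dots> = {a, b, c, d}"
      unfolding d by auto
    finally show "{1..4} = {a, b, c, d}" .
    have "d \<in> {1..4} - {a, b, c}"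
      unfolding d by simp
    with assms show "distinct [a, b, c, d]"
      by (simp add: vertex_triple_def)
  qed
qed

lemma inner_pgl_act:
  "invertible A \<Longrightarrow> pl (pgl_act A F) x \<bullet> pt (pgl_act A F) y = pl F x \<bullet> pt F y"
  by (simp add: pgl_act_def pl_def pt_def dot_lmul_matrix matrix_inv_mult_cancel)

lemma triple_ratio_pgl_act: "invertible A \<Longrightarrow> triple_ratio (pgl_act A F) \<sigma> = triple_ratio F \<sigma>"
  by (cases \<sigma>) (simp add: triple_ratio_def inner_pgl_act)

lemma triple_ratio_flag_eq:
  assumes "flag_eq (G a) (H a')" "flag_eq (G b) (H b')" "flag_eq (G c) (H c')"
  shows "triple_ratio H (a', b', c') = triple_ratio G (a, b, c)"
proof -
  obtain xa ya xb yb xc yc where nz: "xa * ya * xb * yb * xc * yc \<noteq> 0"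
    and "pt H a' = xa *\<^sub>R pt G a" "pl H a' = ya *\<^sub>R pl G a"
        "pt H b' = xb *\<^sub>R pt G b" "pl H b' = yb *\<^sub>R pl G b"
        "pt H c' = xc *\<^sub>R pt G c" "pl H c' = yc *\<^sub>R pl G c"
    using assms unfolding flag_eq_def proj_eq_def pt_def pl_def by (metis mult_eq_0_iff)
  then show ?thesis
    by (simp add: triple_ratio_def mult_divide_mult_cancel_left_if[of "xa * ya * xb * yb * xc * yc", symmetric]
        nz algebra_simps)
qed

lemma triple_ratio_pgl_equiv:
  assumes "pgl_equiv F F'" "vertex_triple \<sigma>"
  shows "triple_ratio F' \<sigma> = triple_ratio F \<sigma>"
proof -
  obtain A where A: "invertible A" "\<forall>m\<in>{1..4}. flag_eq (pgl_act A F m) (F' m)"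
    using assms(1) unfolding pgl_equiv_def by blast
  obtain i j k where \<sigma>: "\<sigma> = (i, j, k)" "{i, j, k} \<subseteq> {1..4}"
    using assms(2) by (auto simp: vertex_triple_def split: prod.splits)
  then have "triple_ratio F' \<sigma> = triple_ratio (pgl_act A F) \<sigma>"
    using A(2) by (simp add: triple_ratio_flag_eq)
  also have "\<dots> = triple_ratio F \<sigma>"
    using A(1) by (rule triple_ratio_pgl_act)
  finally show ?thesis .
qed

lemma triple_ratio_ef_plus: "triple_ratio F (ef_plus \<sigma>) = triple_ratio F \<sigma>"
  and triple_ratio_ef_minus: "triple_ratio F (ef_minus \<sigma>) = triple_ratio F \<sigma>"
  by (auto simp: triple_ratio_def ef_plus_def ef_minus_def mult_ac split: prod.splits)

lemma triple_ratio_swap_mult: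
  assumes "tetrahedron_of_flags F" "vertex_triple (i, j, k)"
  shows "triple_ratio F (j, i, k) * triple_ratio F (i, j, k) = 1"
  using assms tetrahedron_inner_eq_zero_iff[OF assms(1)]
  by (auto simp: triple_ratio_def vertex_triple_def field_simps)

lemma proj_eq_refl: "x \<noteq> 0 \<Longrightarrow> proj_eq x x"
  unfolding proj_eq_def by (auto intro: exI[of _ 1])

lemma pgl_equiv_pgl_act:
  assumes "tetrahedron_of_flags F" "invertible A"
  shows "pgl_equiv F (pgl_act A F)"
  unfolding pgl_equiv_def
proof (intro exI[of _ A] conjI ballI)
  fix m :: nat
  assume "m \<in> {1..4}"
  then show "flag_eq (pgl_act A F m) (pgl_act A F m)"
    using tetrahedron_nonzero[OF assms(1)] invertible_mult_vector_nonzero[OF assms(2)]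
      invertible_mult_vector_nonzero[OF invertible_transpose_matrix_inv[OF assms(2)]]
    by (simp add: flag_eq_def pgl_act_def proj_eq_refl)
qed (fact assms(2))

lemma pgl_equiv_refl: "tetrahedron_of_flags F \<Longrightarrow> pgl_equiv F F"
  using pgl_equiv_pgl_act[of F "mat 1"]
  by (simp add: invertible_def matrix_inv_mat1 pgl_act_def pt_def pl_def)

lemma flag_eq_pgl_act_if_scaled:
  assumes "B *v pt E q = l *\<^sub>R pt F a" "transpose (matrix_inv B) *v pl E q = m *\<^sub>R pl F a"
    and "pt F a \<noteq> 0" "pl F a \<noteq> 0" "l \<noteq> 0" "m \<noteq> 0"
  shows "flag_eq (F a) (pgl_act B E q)"
  using assms unfolding flag_eq_def pgl_act_def proj_eq_def pt_def pl_def by auto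

lemma exists_pgl_act_matching_flags:
  assumes TF: "tetrahedron_of_flags F" and TE: "tetrahedron_of_flags E"
    and abc: "vertex_triple (a, b, c)" and abc': "vertex_triple (a', b', c')"
    and ratio: "triple_ratio F (a, b, c) = triple_ratio E (a', b', c')"
  obtains B where "invertible B" "flag_eq (F a) (pgl_act B E a')"
    "flag_eq (F b) (pgl_act B E b')" "flag_eq (F c) (pgl_act B E c')"
proof -
  obtain d where d: "{1..4} = {a, b, c, d}" "distinct [a, b, c, d]"
    using obtain_fourth_vertex[OF abc] .
  obtain d' where d': "{1..4} = {a', b', c', d'}" "distinct [a', b', c', d']"
    using obtain_fourth_vertex[OF abc'] .
  let ?h = "\<lambda>x y. pl F x \<bullet> pt F y" and ?z = "\<lambda>x y. pl E x \<bullet> pt E y"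
  have "{a, b, c, d} \<subseteq> {1..4}" "{a', b', c', d'} \<subseteq> {1..4}"
    using d d' by simp_all
  then have h: "?h a b \<noteq> 0" "?h a c \<noteq> 0" "?h b a \<noteq> 0" "?h b c \<noteq> 0" "?h c a \<noteq> 0" "?h c b \<noteq> 0"
       "?h a a = 0" "?h b b = 0" "?h c c = 0"
    and z: "?z a' b' \<noteq> 0" "?z a' c' \<noteq> 0" "?z b' a' \<noteq> 0" "?z b' c' \<noteq> 0" "?z c' a' \<noteq> 0" "?z c' b' \<noteq> 0"
       "?z a' a' = 0" "?z b' b' = 0" "?z c' c' = 0"
    and nz: "pt F a \<noteq> 0" "pt F b \<noteq> 0" "pt F c \<noteq> 0" "pl F a \<noteq> 0" "pl F b \<noteq> 0" "pl F c \<noteq> 0"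
    using d(2) d'(2) tetrahedron_inner_eq_zero_iff[OF TF] tetrahedron_inner_eq_zero_iff[OF TE]
      tetrahedron_nonzero[OF TF] by auto
  have ratio': "?h a b * ?h b c * ?h c a * (?z a' c' * ?z b' a' * ?z c' b') =
        ?h a c * ?h b a * ?h c b * (?z a' b' * ?z b' c' * ?z c' a')"
    using ratio h z by (simp add: triple_ratio_def frac_eq_eq mult_ac)
  \<comment> \<open>This is where the convexity condition on \<open>F\<close> is used.\<close>
  have det: "?h a b * ?h b c * ?h c a + ?h a c * ?h b a * ?h c b \<noteq> 0"
    using tetrahedron_face_products_pos[OF TF] abc
    by (force simp: vertex_triple_def add_eq_0_iff)
  obtain la lb lc ma mb mc ua ub uc where
    s: "la \<noteq> 0" "lb \<noteq> 0" "lc \<noteq> 0" "ma \<noteq> 0" "mb \<noteq> 0" "mc \<noteq> 0"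
    "?z a' b' = ma * lb * ?h a b" "?z a' c' = ma * lc * ?h a c" "?z b' a' = mb * la * ?h b a"
    "?z b' c' = mb * lc * ?h b c" "?z c' a' = mc * la * ?h c a" "?z c' b' = mc * lb * ?h c b"
    "?z a' d' = ma * (ub * ?h a b + uc * ?h a c + ?h a d)"
    "?z b' d' = mb * (ua * ?h b a + uc * ?h b c + ?h b d)"
    "?z c' d' = mc * (ua * ?h c a + ub * ?h c b + ?h c d)"
    by (rule exists_gluing_coefficients[OF h(1-6) z(1-6) ratio' det])
  \<comment> \<open>\<open>B\<close> sends the frame of \<open>E\<close> to the rescaled frame of \<open>F\<close>, the fourth vertex to a
      point that makes the three planes match as well.\<close>
  obtain B where B: "invertible B" "B *v pt E a' = la *\<^sub>R pt F a" "B *v pt E b' = lb *\<^sub>R pt F b"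
    "B *v pt E c' = lc *\<^sub>R pt F c"
    "B *v pt E d' = ua *\<^sub>R pt F a + ub *\<^sub>R pt F b + uc *\<^sub>R pt F c + pt F d"
    using exists_invertible_matrix_map_frame[OF tetrahedron_lin_indep4[OF TE d']
        lin_indep4_shear[OF tetrahedron_lin_indep4[OF TF d] s(1-3)]] .
  note match_plane = transpose_matrix_inv_eq_if_inner_eq[OF B(1) tetrahedron_lin_indep4[OF TE d']]
  have planes: "transpose (matrix_inv B) *v pl E a' = ma *\<^sub>R pl F a"
    "transpose (matrix_inv B) *v pl E b' = mb *\<^sub>R pl F b"
    "transpose (matrix_inv B) *v pl E c' = mc *\<^sub>R pl F c"
    by (rule match_plane; simp add: B inner_add_right h z s algebra_simps)+
  show thesis
    by (rule that[OF B(1) flag_eq_pgl_act_if_scaled[OF B(2) planes(1) nz(1,4) s(1,4)]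
          flag_eq_pgl_act_if_scaled[OF B(3) planes(2) nz(2,5) s(2,5)]
          flag_eq_pgl_act_if_scaled[OF B(4) planes(3) nz(3,6) s(3,6)]])
qed

lemma triple_ratio_mult_eq_one_if_glueable:
  assumes TF: "tetrahedron_of_flags F" and TE: "tetrahedron_of_flags E"
    and \<sigma>: "vertex_triple (i, j, k)" and \<tau>: "vertex_triple (i', j', k')"
    and "glueable F E (i, j, k) (i', j', k')"
  shows "triple_ratio F (i, j, k) * triple_ratio E (i', j', k') = 1"
proof -
  obtain F' E' where F': "pgl_equiv F F'" and E': "pgl_equiv E E'"
    and "glued F' E' (i, j, k) (i', j', k')"
    using assms(5) unfolding glueable_def by blast
  then have glued: "flag_eq (F' i) (E' j')" "flag_eq (F' j) (E' i')" "flag_eq (F' k) (E' k')"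
    by (simp_all add: glued_def)
  have \<tau>': "vertex_triple (j', i', k')"
    using \<tau> by (auto simp: vertex_triple_def)
  have "triple_ratio F (i, j, k) = triple_ratio F' (i, j, k)"
    using triple_ratio_pgl_equiv[OF F' \<sigma>] ..
  also have "\<dots> = triple_ratio E' (j', i', k')"
    using triple_ratio_flag_eq[OF glued] ..
  also have "\<dots> = triple_ratio E (j', i', k')"
    using triple_ratio_pgl_equiv[OF E' \<tau>'] .
  finally show ?thesis
    using triple_ratio_swap_mult[OF TE \<tau>] by simp
qed

lemma glueable_if_triple_ratio_mult_eq_one:
  assumes TF: "tetrahedron_of_flags F" and TE: "tetrahedron_of_flags E"
    and \<sigma>: "vertex_triple (i, j, k)" and \<tau>: "vertex_triple (i', j', k')"
    and "triple_ratio F (i, j, k) * triple_ratio E (i', j', k') = 1"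
  shows "glueable F E (i, j, k) (i', j', k')"
proof -
  have \<tau>': "vertex_triple (j', i', k')"
    using \<tau> by (auto simp: vertex_triple_def)
  have "triple_ratio F (i, j, k) = triple_ratio E (j', i', k')"
    using assms(5) triple_ratio_swap_mult[OF TE \<tau>] by (metis mult.commute mult_cancel_left mult_1)
  then obtain B where "invertible B" "flag_eq (F i) (pgl_act B E j')"
    "flag_eq (F j) (pgl_act B E i')" "flag_eq (F k) (pgl_act B E k')"
    using exists_pgl_act_matching_flags[OF TF TE \<sigma> \<tau>'] by blast
  then show ?thesis
    unfolding glueable_def glued_def
    using pgl_equiv_refl[OF TF] pgl_equiv_pgl_act[OF TE] by auto
qed

lemma glueable_iff_triple_ratio_mult_eq_one:
  assumes "tetrahedron_of_flags F" "tetrahedron_of_flags E" "vertex_triple \<sigma>" "vertex_triple \<tau>"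
  shows "glueable F E \<sigma> \<tau> \<longleftrightarrow> triple_ratio F \<sigma> * triple_ratio E \<tau> = 1"
  using assms triple_ratio_mult_eq_one_if_glueable glueable_if_triple_ratio_mult_eq_one
  by (cases \<sigma>, cases \<tau>) blast

theorem lemma3p1:
  fixes F E :: flagquad and \<sigma> \<tau> :: "nat \<times> nat \<times> nat"
  assumes "edge_face \<sigma>" and "edge_face \<tau>"
    and "tetrahedron_of_flags F" and "tetrahedron_of_flags E"
  shows "(glueable F E \<sigma> \<tau> \<longleftrightarrow> triple_ratio F \<sigma> * triple_ratio E \<tau> = 1) \<and>
         (glueable F E \<sigma> \<tau> \<longrightarrow>
            (\<forall>\<sigma>'\<in>{\<sigma>, ef_plus \<sigma>, ef_minus \<sigma>}. \<forall>\<tau>'\<in>{\<tau>, ef_plus \<tau>, ef_minus \<tau>}.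
               glueable F E \<sigma>' \<tau>'))"
proof -
  have \<sigma>: "vertex_triple \<sigma>" and \<tau>: "vertex_triple \<tau>"
    using assms(1,2) by (simp_all add: vertex_triple_if_edge_face)
  have rotation: "vertex_triple \<rho>' \<and> triple_ratio G \<rho>' = triple_ratio G \<rho>"
    if "vertex_triple \<rho>" "\<rho>' \<in> {\<rho>, ef_plus \<rho>, ef_minus \<rho>}" for \<rho> \<rho>' G
    using that by (auto simp: vertex_triple_ef_plus vertex_triple_ef_minus
        triple_ratio_ef_plus triple_ratio_ef_minus)
  have "glueable F E \<sigma>' \<tau>' \<longleftrightarrow> triple_ratio F \<sigma> * triple_ratio E \<tau> = 1"
    if "\<sigma>' \<in> {\<sigma>, ef_plus \<sigma>, ef_minus \<sigma>}" "\<tau>' \<in> {\<tau>, ef_plus \<tau>, ef_minus \<tau>}" for \<sigma>' \<tau>'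
    using rotation[OF \<sigma> that(1)] rotation[OF \<tau> that(2)]
    by (simp add: glueable_iff_triple_ratio_mult_eq_one assms(3,4))
  then show ?thesis
    by blast
qed

end
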